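(* Let $f(x)=\frac1n\sum_{t=1}^n f_t(x)$ where each $f_t:\mathbb{R}^d\to\mathbb{R}$ is convex and continuously differentiable, and suppose there are positive semidefinite matrices $Q^1,\dots,Q^m$ such that for all $t\in[n]$, $j\in[m]$ and $x,y\in\mathbb{R}^d$, $\|\nabla^{(j)} f_t(x)-\nabla^{(j)} f_t(y)\|^2\le\|x-y\|^2_{Q^j}$. Then for all $j\in[m]$ and $x,y$, $\|\nabla^{(j)} f(x)-\nabla^{(j)} f(y)\|^2\le\|x-y\|^2_{Q^j}$; consequently, with $L^2=2\|\tilde Q\|$, $f$ satisfies for all $x,y$: $f(y)-f(x)\le\langle\nabla f(x),y-x\rangle+\frac L2\|y-x\|^2$ and $\|\nabla f(y)-\nabla f(x)\|^2\le 2L(f(y)-f(x)-\langle\nabla f(x),y-x\rangle)$.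
   Context: The coordinates $\{1,\dots,d\}$ are partitioned into $m$ consecutive blocks $\mathcal{S}^1,\dots,\mathcal{S}^m$; $\nabla^{(j)}$ denotes the block-$j$ part of a gradient. For a PSD matrix $Q$, $\|x\|_Q^2=x^\top Qx$. For a $d\times d$ matrix $Q$, $(Q)_{\ge j}$ is obtained by zeroing all rows and columns indexed by blocks $1,\dots,j-1$. $\tilde Q=\sum_{j=1}^m[(Q^j)_{\ge j}+(Q^j)_{\ge j+1}]$ and $L^2=2\|\tilde Q\|<\infty$ (operator norm). *)

theory Defs
  imports "HOL-Analysis.Analysis"
begin

text \<open>Coordinates are indexed by a finite linearly ordered type 'd (so vectors are real^'d,
  i.e. R^d with d = CARD('d)). Blocks are S 1, ..., S m.\<close>

definition block_partition :: "nat \<Rightarrow> (nat \<Rightarrow> ('d::{finite,linorder}) set) \<Rightarrow> bool" where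
  "block_partition m S \<longleftrightarrow>
     (\<Union>j\<in>{1..m}. S j) = UNIV \<and>
     (\<forall>j\<in>{1..m}. S j \<noteq> {}) \<and>
     (\<forall>j k a b. 1 \<le> j \<and> j < k \<and> k \<le> m \<and> a \<in> S j \<and> b \<in> S k \<longrightarrow> a < b)"

text \<open>Block-j part of a vector (other coordinates zeroed; its norm is the norm of the block).\<close>
definition block_part :: "(nat \<Rightarrow> ('d::finite) set) \<Rightarrow> nat \<Rightarrow> real^'d \<Rightarrow> real^'d" where
  "block_part S j v = (\<chi> i. if i \<in> S j then v $ i else 0)"

definition psd :: "real^'d^'d \<Rightarrow> bool" where
  "psd Q \<longleftrightarrow> transpose Q = Q \<and> (\<forall>x. 0 \<le> x \<bullet> (Q *v x))"

definition qnorm_sq :: "real^'d^'d \<Rightarrow> real^'d \<Rightarrow> real" where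
  "qnorm_sq Q x = x \<bullet> (Q *v x)"

definition mat_geq :: "(nat \<Rightarrow> ('d::finite) set) \<Rightarrow> nat \<Rightarrow> real^'d^'d \<Rightarrow> real^'d^'d" where
  "mat_geq S j Q = (\<chi> a b. if a \<in> (\<Union>k\<in>{1..<j}. S k) \<or> b \<in> (\<Union>k\<in>{1..<j}. S k) then 0 else Q $ a $ b)"

definition Q_tilde :: "nat \<Rightarrow> (nat \<Rightarrow> ('d::finite) set) \<Rightarrow> (nat \<Rightarrow> real^'d^'d) \<Rightarrow> real^'d^'d" where
  "Q_tilde m S Q = (\<Sum>j\<in>{1..m}. mat_geq S j (Q j) + mat_geq S (j+1) (Q j))"

definition mat_opnorm :: "real^'d^'d \<Rightarrow> real" where
  "mat_opnorm A = onorm (\<lambda>x. A *v x)"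

end

theory Submission
  imports Defs
begin

text \<open>The blockwise bound for f is inherited from the f_t by averaging. For the descent inequality,
  walk from x to y changing one block at a time, block k on the k-th leg, whose endpoints differ from
  x in the blocks >= k and >= k+1 respectively. On that leg only the block-k gradient matters, and its
  deviation from g x is bounded by the root of the Q^k-form of the displacement from x, a convex
  combination of the endpoint displacements. Averaging this root over the leg (Jensen) gives the two
  terms (Q^k)_{>=k} and (Q^k)_{>=k+1} of Q_tilde; Cauchy-Schwarz over the blocks then yields
  L/2 |y - x|^2. Cocoercivity follows from descent and convexity by the standard argument of
  evaluating f at y - (g y - g x) / L.\<close>

definition vec_restrict :: "'d set \<Rightarrow> real^'d \<Rightarrow> real^'d" where
  "vec_restrict A z = (\<chi> i. if i \<in> A then z $ i else 0)"

lemma block_part_eq_vec_restrict: "block_part S j = vec_restrict (S j)"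
  by (simp add: block_part_def vec_restrict_def fun_eq_iff)

lemma linear_vec_restrict: "linear (vec_restrict A)"
  by (rule linearI) (simp_all add: vec_restrict_def vec_eq_iff)

lemma vec_restrict_UNIV [simp]: "vec_restrict UNIV z = z"
  and vec_restrict_empty [simp]: "vec_restrict {} z = 0"
  by (simp_all add: vec_restrict_def vec_eq_iff)

lemma vec_restrict_idem [simp]: "vec_restrict A (vec_restrict A z) = vec_restrict A z"
  by (simp add: vec_restrict_def vec_eq_iff)

lemma vec_restrict_Un:
  "A \<inter> B = {} \<Longrightarrow> vec_restrict (A \<union> B) z = vec_restrict A z + vec_restrict B z"
  by (auto simp: vec_restrict_def vec_eq_iff)

lemma inner_vec_restrict: "u \<bullet> vec_restrict A z = vec_restrict A u \<bullet> z"
  by (auto simp: vec_restrict_def inner_vec_def intro!: sum.cong)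

lemma norm_vec_restrict_sq: "(norm (vec_restrict A z))\<^sup>2 = (\<Sum>i\<in>A. (z $ i)\<^sup>2)"
  unfolding power2_norm_eq_inner
  by (simp add: inner_vec_def vec_restrict_def if_distrib power2_eq_square sum.If_cases)

lemma psd_form_sym:
  "psd Q \<Longrightarrow> a \<bullet> (Q *v b) = b \<bullet> (Q *v a)"
  unfolding psd_def by (metis dot_lmul_matrix transpose_matrix_vector inner_commute)

lemma qnorm_sq_nonneg: "psd Q \<Longrightarrow> 0 \<le> qnorm_sq Q z"
  by (simp add: psd_def qnorm_sq_def)

lemma convex_on_qnorm_sq:
  assumes "psd Q"
  shows "convex_on UNIV (qnorm_sq Q)"
proof (rule convex_onI)
  fix t :: real and a b
  assume "0 < t" "t < 1"
  have sym: "a \<bullet> (Q *v b) = b \<bullet> (Q *v a)" by (rule psd_form_sym[OF assms])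
  have "0 \<le> t * (1 - t) * qnorm_sq Q (a - b)"
    using \<open>0 < t\<close> \<open>t < 1\<close> qnorm_sq_nonneg[OF assms] by simp
  then show "qnorm_sq Q ((1 - t) *\<^sub>R a + t *\<^sub>R b) \<le> (1 - t) * qnorm_sq Q a + t * qnorm_sq Q b"
    using sym unfolding qnorm_sq_def
    by (simp add: matrix_vector_mult_diff_distrib matrix_vector_right_distrib
        matrix_vector_mult_scaleR inner_diff_left inner_diff_right inner_add_left inner_add_right
        algebra_simps)
qed simp

lemma qnorm_sq_add_matrix: "qnorm_sq (A + B) z = qnorm_sq A z + qnorm_sq B z"
  unfolding qnorm_sq_def by (simp add: matrix_vector_mult_add_rdistrib inner_add_right)

lemma qnorm_sq_sum_matrix: "qnorm_sq (\<Sum>j\<in>I. A j) z = (\<Sum>j\<in>I. qnorm_sq (A j) z)"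
  by (induction I rule: infinite_finite_induct)
    (simp_all add: qnorm_sq_add_matrix, simp_all add: qnorm_sq_def)

lemma qnorm_sq_le_mat_opnorm: "qnorm_sq A z \<le> mat_opnorm A * (norm z)\<^sup>2"
proof -
  have "qnorm_sq A z \<le> norm z * norm (A *v z)"
    unfolding qnorm_sq_def by (rule norm_cauchy_schwarz)
  also have "\<dots> \<le> norm z * (mat_opnorm A * norm z)"
    unfolding mat_opnorm_def by (intro mult_left_mono onorm) simp_all
  finally show ?thesis by (simp add: power2_eq_square ac_simps)
qed

definition blocks_before :: "(nat \<Rightarrow> 'd set) \<Rightarrow> nat \<Rightarrow> 'd set" where
  "blocks_before S j = (\<Union>k\<in>{1..<j}. S k)"

lemma qnorm_sq_mat_geq:
  "qnorm_sq (mat_geq S j Q) z = qnorm_sq Q (vec_restrict (- blocks_before S j) z)"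
  unfolding qnorm_sq_def mat_geq_def vec_restrict_def blocks_before_def
  by (auto simp: inner_vec_def matrix_vector_mult_def sum_distrib_left intro!: sum.cong)

lemma blocks_before_1 [simp]: "blocks_before S 1 = {}"
  by (simp add: blocks_before_def)

lemma blocks_before_Suc: "1 \<le> k \<Longrightarrow> blocks_before S (Suc k) = blocks_before S k \<union> S k"
  unfolding blocks_before_def by (auto simp: less_Suc_eq)

context
  fixes m :: nat and S :: "nat \<Rightarrow> 'd::{finite,linorder} set"
  assumes blocks: "block_partition m S"
begin

lemma blocks_before_all: "blocks_before S (Suc m) = UNIV"
  using blocks unfolding blocks_before_def block_partition_def
  by (simp add: atLeastLessThanSuc_atLeastAtMost)

lemma blocks_disjoint: "j \<in> {1..m} \<Longrightarrow> k \<in> {1..m} \<Longrightarrow> j \<noteq> k \<Longrightarrow> S j \<inter> S k = {}"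
  using blocks unfolding block_partition_def
  by (metis atLeastAtMost_iff disjoint_iff less_asym' nat_neq_iff)

lemma block_disjoint_before: "k \<in> {1..m} \<Longrightarrow> S k \<inter> blocks_before S k = {}"
  using blocks_disjoint unfolding blocks_before_def by fastforce

lemma vec_restrict_tail_split:
  assumes "k \<in> {1..m}"
  shows "vec_restrict (- blocks_before S k) z
    = vec_restrict (S k) z + vec_restrict (- blocks_before S (Suc k)) z"
proof -
  have "- blocks_before S k = S k \<union> - blocks_before S (Suc k)"
    and "S k \<inter> - blocks_before S (Suc k) = {}"
    using assms block_disjoint_before blocks_before_Suc[of k S] by auto
  then show ?thesis by (metis vec_restrict_Un)
qed

lemma sum_norm_vec_restrict_blocks_sq:
  "(\<Sum>k\<in>{1..m}. (norm (vec_restrict (S k) z))\<^sup>2) = (norm z)\<^sup>2"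
proof -
  have "(\<Sum>k\<in>{1..m}. (norm (vec_restrict (S k) z))\<^sup>2) = (\<Sum>i\<in>(\<Union>k\<in>{1..m}. S k). (z $ i)\<^sup>2)"
    unfolding norm_vec_restrict_sq using blocks_disjoint by (intro sum.UNION_disjoint[symmetric]) auto
  also have "\<dots> = (norm z)\<^sup>2"
    using blocks norm_vec_restrict_sq[of UNIV z] unfolding block_partition_def by simp
  finally show ?thesis .
qed

end

lemma power2_norm_average_le:
  assumes "finite I" "I \<noteq> {}" and bound: "\<And>t. t \<in> I \<Longrightarrow> (norm (a t))\<^sup>2 \<le> q"
  shows "(norm ((1 / real (card I)) *\<^sub>R (\<Sum>t\<in>I. a t)))\<^sup>2 \<le> q"
proof -
  have "norm (\<Sum>t\<in>I. a t) \<le> real (card I) * sqrt q"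
    using norm_sum[of a I] sum_bounded_above[of I "\<lambda>t. norm (a t)" "sqrt q"] bound real_le_rsqrt
    by (smt (verit))
  then have "norm ((1 / real (card I)) *\<^sub>R (\<Sum>t\<in>I. a t)) \<le> sqrt q"
    using assms by (simp add: field_simps card_gt_0_iff)
  moreover have "0 \<le> q" using bound assms by (meson all_not_in_conv order_trans zero_le_power2)
  ultimately show ?thesis by (metis norm_ge_zero power_mono real_sqrt_pow2)
qed

lemma vec_restrict_lipschitz_average:
  assumes "finite I" "I \<noteq> {}"
    and average: "\<And>x. g x = (1 / real (card I)) *\<^sub>R (\<Sum>t\<in>I. gt t x)"
    and bound: "\<And>t. t \<in> I \<Longrightarrow> (norm (vec_restrict B (gt t x - gt t y)))\<^sup>2 \<le> q"
  shows "(norm (vec_restrict B (g x - g y)))\<^sup>2 \<le> q"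
proof -
  have "vec_restrict B (g x - g y)
      = (1 / real (card I)) *\<^sub>R (\<Sum>t\<in>I. vec_restrict B (gt t x - gt t y))"
    unfolding average using linear_vec_restrict[of B]
    by (simp add: linear_scale linear_sum linear_diff sum_subtractf scaleR_diff_right)
  also have "(norm \<dots>)\<^sup>2 \<le> q"
    using assms by (intro power2_norm_average_le)
  finally show ?thesis .
qed

lemma gderiv_unique:
  assumes "GDERIV f x :> a" and "GDERIV f x :> b"
  shows "a = b"
proof -
  have "(\<lambda>h. h \<bullet> a) = (\<lambda>h. h \<bullet> b)"
    using has_derivative_unique assms unfolding gderiv_def by blast
  then have "(a - b) \<bullet> (a - b) = 0"
    by (metis inner_diff_right right_minus_eq)
  then show ?thesis by simp
qed

lemma gderiv_scaled_sum:
  assumes "\<And>t. t \<in> I \<Longrightarrow> GDERIV (f t) x :> g t x"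
  shows "GDERIV (\<lambda>x. c * (\<Sum>t\<in>I. f t x)) x :> c *\<^sub>R (\<Sum>t\<in>I. g t x)"
  using assms unfolding gderiv_def
  by (auto simp: inner_sum_right intro!: has_derivative_mult_right has_derivative_sum)

lemma gderiv_along_line:
  assumes "GDERIV f (u + s *\<^sub>R v) :> g"
  shows "((\<lambda>s. f (u + s *\<^sub>R v)) has_real_derivative g \<bullet> v) (at s)"
proof -
  have "((\<lambda>s. u + s *\<^sub>R v) has_derivative (\<lambda>h. h *\<^sub>R v)) (at s)"
    by (auto intro!: derivative_eq_intros)
  from has_derivative_compose[OF this assms[unfolded gderiv_def]]
  show ?thesis by (simp add: has_field_derivative_def inner_commute mult_commute_abs)
qed

lemma convex_on_scaled_sum:
  fixes f :: "'i \<Rightarrow> 'a::real_vector \<Rightarrow> real"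
  assumes "0 \<le> c" and "\<And>t. t \<in> I \<Longrightarrow> convex_on UNIV (f t)"
  shows "convex_on UNIV (\<lambda>x. c * (\<Sum>t\<in>I. f t x))"
proof -
  have "convex_on UNIV (\<lambda>x. \<Sum>t\<in>I. f t x)"
    using assms(2)
  proof (induction I rule: infinite_finite_induct)
    case (insert t I)
    then show ?case by (simp add: convex_on_add)
  qed (simp_all add: convex_on_const)
  with \<open>0 \<le> c\<close> show ?thesis by (rule convex_on_cmul)
qed

lemma gradient_inequality:
  fixes f :: "'a::real_inner \<Rightarrow> real"
  assumes convex: "convex_on UNIV f" and grad: "\<And>w. GDERIV f w :> g w"
  shows "g x \<bullet> (y - x) \<le> f y - f x"
proof -
  define \<phi> where "\<phi> s = f (x + s *\<^sub>R (y - x))" for s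
  have "convex_on UNIV \<phi>"
  proof (rule convex_onI)
    fix t a b :: real
    assume "0 < t" "t < 1"
    have "x + ((1 - t) *\<^sub>R a + t *\<^sub>R b) *\<^sub>R (y - x)
        = (1 - t) *\<^sub>R (x + a *\<^sub>R (y - x)) + t *\<^sub>R (x + b *\<^sub>R (y - x))"
      by (simp add: algebra_simps)
    then show "\<phi> ((1 - t) *\<^sub>R a + t *\<^sub>R b) \<le> (1 - t) * \<phi> a + t * \<phi> b"
      unfolding \<phi>_def using convex_onD[OF convex, of t] \<open>0 < t\<close> \<open>t < 1\<close> by simp
  qed simp
  moreover have "(\<phi> has_real_derivative g x \<bullet> (y - x)) (at 0)"
    unfolding \<phi>_def using gderiv_along_line[of f x 0 "y - x"] grad by simp
  ultimately have "g x \<bullet> (y - x) * (1 - 0) \<le> \<phi> 1 - \<phi> 0"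
    by (intro convex_on_imp_above_tangent[of UNIV]) auto
  then show ?thesis unfolding \<phi>_def by simp
qed

lemma increment_le_of_deriv_le:
  fixes h p :: "real \<Rightarrow> real"
  assumes "\<And>s. (h has_real_derivative h' s) (at s)" and "\<And>s. (p has_real_derivative p' s) (at s)"
    and "\<And>s. 0 \<le> s \<Longrightarrow> s \<le> 1 \<Longrightarrow> h' s \<le> p' s"
  shows "h 1 - h 0 \<le> p 1 - p 0"
proof -
  have "(\<lambda>s. h s - p s) 1 \<le> (\<lambda>s. h s - p s) 0"
  proof (rule DERIV_nonpos_imp_nonincreasing[where f = "\<lambda>s. h s - p s"])
    fix s :: real
    assume "0 \<le> s" "s \<le> 1"
    then show "\<exists>y. ((\<lambda>s. h s - p s) has_real_derivative y) (at s) \<and> y \<le> 0"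
      using assms by (intro exI[of _ "h' s - p' s"]) (auto intro: DERIV_diff)
  qed simp
  then show ?thesis by simp
qed

lemma sqrt_le_tangent:
  assumes "0 \<le> w" and "0 < c"
  shows "sqrt w \<le> (w / c + c) / 2"
proof -
  have "0 \<le> (sqrt w - c)\<^sup>2" by simp
  then have "2 * c * sqrt w \<le> w + c\<^sup>2"
    using assms by (simp add: power2_diff algebra_simps)
  then show ?thesis using assms by (simp add: field_simps power2_eq_square)
qed

text \<open>Jensen's inequality for the concave square root along [0, 1], without integration: h is
  compared with an antiderivative of the tangent-line majorant of sqrt at the mean (A + B) / 2.\<close>

lemma increment_le_sqrt_mean:
  fixes h h' :: "real \<Rightarrow> real"
  assumes deriv: "\<And>s. (h has_real_derivative h' s) (at s)"
    and bound: "\<And>s. 0 \<le> s \<Longrightarrow> s \<le> 1 \<Longrightarrow> h' s \<le> G + N * sqrt ((1 - s) * B + s * A)"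
    and "0 \<le> A" "0 \<le> B" "0 \<le> N"
  shows "h 1 - h 0 \<le> G + N * sqrt ((A + B) / 2)"
proof (cases "A + B = 0")
  case True
  then have "A = 0" "B = 0" using \<open>0 \<le> A\<close> \<open>0 \<le> B\<close> by auto
  then have "h 1 - h 0 \<le> G * 1 - G * 0"
    using bound by (intro increment_le_of_deriv_le[OF deriv, where p' = "\<lambda>_. G"])
      (auto intro!: derivative_eq_intros)
  then show ?thesis using True by simp
next
  case False
  define c where "c = sqrt ((A + B) / 2)"
  have "0 < c" using False \<open>0 \<le> A\<close> \<open>0 \<le> B\<close> by (simp add: c_def)
  define \<alpha> where "\<alpha> = G + N / 2 * (B / c + c)"
  define \<beta> where "\<beta> = N * (A - B) / (4 * c)"
  have "h 1 - h 0 \<le> (\<alpha> * 1 + \<beta> * 1\<^sup>2) - (\<alpha> * 0 + \<beta> * 0\<^sup>2)"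
  proof (rule increment_le_of_deriv_le[OF deriv])
    show "((\<lambda>s. \<alpha> * s + \<beta> * s\<^sup>2) has_real_derivative \<alpha> + 2 * \<beta> * s) (at s)" for s
      by (auto intro!: derivative_eq_intros)
    show "h' s \<le> \<alpha> + 2 * \<beta> * s" if "0 \<le> s" "s \<le> 1" for s
    proof -
      have w: "0 \<le> (1 - s) * B + s * A" using that \<open>0 \<le> A\<close> \<open>0 \<le> B\<close> by simp
      have "h' s \<le> G + N * ((((1 - s) * B + s * A) / c + c) / 2)"
        using bound[OF that] mult_left_mono[OF sqrt_le_tangent[OF w \<open>0 < c\<close>] \<open>0 \<le> N\<close>] by linarith
      also have "\<dots> = \<alpha> + 2 * \<beta> * s"
        using \<open>0 < c\<close> unfolding \<alpha>_def \<beta>_def by (simp add: field_simps)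
      finally show ?thesis .
    qed
  qed
  also have "\<dots> = G + N * ((A + B) / (4 * c) + c / 2)"
    using \<open>0 < c\<close> unfolding \<alpha>_def \<beta>_def by (simp add: field_simps)
  also have "\<dots> = G + N * c"
  proof -
    have "A + B = 2 * c\<^sup>2" using \<open>0 \<le> A\<close> \<open>0 \<le> B\<close> by (simp add: c_def)
    then show ?thesis using \<open>0 < c\<close> by (simp add: field_simps power2_eq_square)
  qed
  finally show ?thesis by (simp add: c_def)
qed

lemma block_increment_le:
  fixes f :: "real^'d \<Rightarrow> real"
  assumes grad: "\<And>w. GDERIV f w :> g w"
    and psd: "psd Q"
    and lipschitz: "\<And>x y. (norm (vec_restrict B (g x - g y)))\<^sup>2 \<le> qnorm_sq Q (x - y)"
    and supported: "vec_restrict B (a - b) = a - b"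
  shows "f (x + a) - f (x + b) - g x \<bullet> (a - b)
    \<le> norm (a - b) * sqrt ((qnorm_sq Q a + qnorm_sq Q b) / 2)"
proof -
  define v where "v = a - b"
  define u where "u = x + b"
  have "f (u + 1 *\<^sub>R v) - f (u + 0 *\<^sub>R v) \<le> g x \<bullet> v + norm v * sqrt ((qnorm_sq Q a + qnorm_sq Q b) / 2)"
  proof (rule increment_le_sqrt_mean)
    show "((\<lambda>s. f (u + s *\<^sub>R v)) has_real_derivative g (u + s *\<^sub>R v) \<bullet> v) (at s)" for s
      using grad by (rule gderiv_along_line)
    show "g (u + s *\<^sub>R v) \<bullet> v \<le> g x \<bullet> v + norm v * sqrt ((1 - s) * qnorm_sq Q b + s * qnorm_sq Q a)"
      if "0 \<le> s" "s \<le> 1" for s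
    proof -
      define w where "w = u + s *\<^sub>R v"
      have "(g w - g x) \<bullet> v = vec_restrict B (g w - g x) \<bullet> v"
        using supported unfolding v_def by (metis inner_vec_restrict)
      also have "\<dots> \<le> norm (vec_restrict B (g w - g x)) * norm v"
        by (rule norm_cauchy_schwarz)
      also have "\<dots> \<le> sqrt ((1 - s) * qnorm_sq Q b + s * qnorm_sq Q a) * norm v"
      proof (rule mult_right_mono[OF real_le_rsqrt])
        have "w - x = (1 - s) *\<^sub>R b + s *\<^sub>R a"
          unfolding w_def u_def v_def by (simp add: algebra_simps)
        then show "(norm (vec_restrict B (g w - g x)))\<^sup>2 \<le> (1 - s) * qnorm_sq Q b + s * qnorm_sq Q a"
          using lipschitz[of w x] convex_onD[OF convex_on_qnorm_sq[OF psd], of s b a] that by simp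
      qed simp
      finally show ?thesis unfolding w_def by (simp add: inner_diff_left mult.commute)
    qed
  qed (use qnorm_sq_nonneg[OF psd] in simp_all)
  then show ?thesis unfolding u_def v_def by (simp add: add.assoc)
qed

lemma blockwise_descent:
  fixes f :: "real^'d::{finite,linorder} \<Rightarrow> real"
  assumes blocks: "block_partition m S"
    and grad: "\<And>w. GDERIV f w :> g w"
    and psd: "\<And>j. j \<in> {1..m} \<Longrightarrow> psd (Q j)"
    and lipschitz: "\<And>j x y. j \<in> {1..m} \<Longrightarrow>
      (norm (vec_restrict (S j) (g x - g y)))\<^sup>2 \<le> qnorm_sq (Q j) (x - y)"
  shows "f y - f x - g x \<bullet> (y - x) \<le> norm (y - x) * sqrt (qnorm_sq (Q_tilde m S Q) (y - x) / 2)"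
proof -
  define z where "z = y - x"
  define tail where "tail k = vec_restrict (- blocks_before S k) z" for k
  define \<phi> where "\<phi> k = f (x + tail k) - g x \<bullet> tail k" for k
  define N where "N k = norm (vec_restrict (S k) z)" for k
  define M where "M k = (qnorm_sq (Q k) (tail k) + qnorm_sq (Q k) (tail (Suc k))) / 2" for k
  have M_nonneg: "0 \<le> M k" if "k \<in> {1..m}" for k
    using qnorm_sq_nonneg[OF psd[OF that]] by (simp add: M_def)
  have step: "\<phi> k - \<phi> (Suc k) \<le> N k * sqrt (M k)" if k: "k \<in> {1..m}" for k
  proof -
    have diff: "tail k - tail (Suc k) = vec_restrict (S k) z"
      using vec_restrict_tail_split[OF blocks k] unfolding tail_def by simp
    have "f (x + tail k) - f (x + tail (Suc k)) - g x \<bullet> (tail k - tail (Suc k))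
      \<le> norm (tail k - tail (Suc k)) * sqrt (M k)"
      unfolding M_def by (rule block_increment_le[OF grad psd[OF k] lipschitz[OF k]]) (simp add: diff)
    then show ?thesis unfolding \<phi>_def N_def diff[symmetric] by (simp add: inner_diff_right)
  qed
  have "f y - f x - g x \<bullet> (y - x) = \<phi> 1 - \<phi> (Suc m)"
    using blocks_before_all[OF blocks] blocks_before_1[of S, unfolded One_nat_def]
    unfolding \<phi>_def tail_def z_def by simp
  also have "\<dots> = (\<Sum>k\<in>{1..m}. \<phi> k - \<phi> (Suc k))"
    using sum_Suc_diff[of 1 m "\<lambda>k. - \<phi> k"] by simp
  also have "\<dots> \<le> (\<Sum>k\<in>{1..m}. N k * sqrt (M k))"
    by (intro sum_mono step)
  also have "\<dots> \<le> L2_set N {1..m} * L2_set (\<lambda>k. sqrt (M k)) {1..m}"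
    using L2_set_mult_ineq[of N "\<lambda>k. sqrt (M k)" "{1..m}"] M_nonneg by (simp add: N_def)
  also have "L2_set N {1..m} = norm z"
    using sum_norm_vec_restrict_blocks_sq[OF blocks] by (simp add: L2_set_def N_def)
  also have "L2_set (\<lambda>k. sqrt (M k)) {1..m} = sqrt (qnorm_sq (Q_tilde m S Q) z / 2)"
  proof -
    have "(\<Sum>k\<in>{1..m}. (sqrt (M k))\<^sup>2) = (\<Sum>k\<in>{1..m}. M k)"
      using M_nonneg by simp
    also have "\<dots> = qnorm_sq (Q_tilde m S Q) z / 2"
      unfolding Q_tilde_def qnorm_sq_sum_matrix qnorm_sq_add_matrix qnorm_sq_mat_geq M_def tail_def
      by (simp add: sum_divide_distrib)
    finally show ?thesis by (simp add: L2_set_def)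
  qed
  finally show ?thesis unfolding z_def .
qed

lemma cocoercive_of_descent:
  fixes f :: "'a::real_inner \<Rightarrow> real"
  assumes descent: "\<And>x y. f y - f x \<le> g x \<bullet> (y - x) + L / 2 * (norm (y - x))\<^sup>2"
    and tangent: "\<And>x y. g x \<bullet> (y - x) \<le> f y - f x"
    and "0 \<le> L"
  shows "(norm (g y - g x))\<^sup>2 \<le> 2 * L * (f y - f x - g x \<bullet> (y - x))"
proof -
  define v where "v = g y - g x"
  define D where "D = f y - f x - g x \<bullet> (y - x)"
  have key: "t * (norm v)\<^sup>2 - L / 2 * t\<^sup>2 * (norm v)\<^sup>2 \<le> D" for t
  proof -
    define w where "w = y - t *\<^sub>R v"
    have "f w - f y \<le> g y \<bullet> (w - y) + L / 2 * (norm (w - y))\<^sup>2" by (rule descent)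
    moreover have "g x \<bullet> (w - x) \<le> f w - f x" by (rule tangent)
    moreover have "L / 2 * (norm (w - y))\<^sup>2 = L / 2 * t\<^sup>2 * (norm v)\<^sup>2"
      unfolding w_def by (simp add: power_mult_distrib)
    moreover have "g y \<bullet> (w - y) - g x \<bullet> (w - x) = - t * (norm v)\<^sup>2 - g x \<bullet> (y - x)"
      unfolding w_def v_def power2_norm_eq_inner by (simp add: inner_diff_left inner_diff_right algebra_simps)
    ultimately show ?thesis unfolding D_def by linarith
  qed
  show ?thesis
  proof (cases "L = 0")
    case False
    with \<open>0 \<le> L\<close> have "0 < L" by simp
    have "(norm v)\<^sup>2 / (2 * L) = 1 / L * (norm v)\<^sup>2 - L / 2 * (1 / L)\<^sup>2 * (norm v)\<^sup>2"
      using \<open>0 < L\<close> by (simp add: power2_eq_square field_simps)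
    also have "\<dots> \<le> D" by (rule key)
    finally show ?thesis using \<open>0 < L\<close> unfolding v_def D_def by (simp add: field_simps)
  next
    case True
    \<comment> \<open>Letting t grow in the key inequality forces g y = g x.\<close>
    have "(norm v)\<^sup>2 \<le> 0"
    proof (rule ccontr)
      assume "\<not> (norm v)\<^sup>2 \<le> 0"
      then show False
        using key[of "(\<bar>D\<bar> + 1) / (norm v)\<^sup>2"] True by simp
    qed
    then show ?thesis using True unfolding v_def by simp
  qed
qed

lemma descent_inequality:
  fixes f :: "real^'d::{finite,linorder} \<Rightarrow> real"
  assumes blocks: "block_partition m S"
    and grad: "\<And>w. GDERIV f w :> g w"
    and psd: "\<And>j. j \<in> {1..m} \<Longrightarrow> psd (Q j)"
    and lipschitz: "\<And>j x y. j \<in> {1..m} \<Longrightarrow>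
      (norm (vec_restrict (S j) (g x - g y)))\<^sup>2 \<le> qnorm_sq (Q j) (x - y)"
    and L: "0 \<le> L" "L\<^sup>2 = 2 * mat_opnorm (Q_tilde m S Q)"
  shows "f y - f x \<le> g x \<bullet> (y - x) + L / 2 * (norm (y - x))\<^sup>2"
proof -
  have "f y - f x - g x \<bullet> (y - x) \<le> norm (y - x) * sqrt (qnorm_sq (Q_tilde m S Q) (y - x) / 2)"
    by (rule blockwise_descent[OF blocks grad psd lipschitz])
  also have "\<dots> \<le> norm (y - x) * sqrt (mat_opnorm (Q_tilde m S Q) * (norm (y - x))\<^sup>2 / 2)"
    by (intro mult_left_mono real_sqrt_le_mono divide_right_mono qnorm_sq_le_mat_opnorm) simp_all
  also have "sqrt (mat_opnorm (Q_tilde m S Q) * (norm (y - x))\<^sup>2 / 2) = L / 2 * norm (y - x)"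
    using L by (intro real_sqrt_unique) (simp_all add: power_mult_distrib power_divide)
  finally show ?thesis by (simp add: power2_eq_square mult_ac)
qed

theorem lemma4:
  fixes n m :: nat
    and S :: "nat \<Rightarrow> ('d::{finite,linorder}) set"
    and ft :: "nat \<Rightarrow> (real, 'd) vec \<Rightarrow> real"
    and gt :: "nat \<Rightarrow> (real, 'd) vec \<Rightarrow> (real, 'd) vec"
    and f :: "(real, 'd) vec \<Rightarrow> real"
    and g :: "(real, 'd) vec \<Rightarrow> (real, 'd) vec"
    and Q :: "nat \<Rightarrow> ((real, 'd) vec, 'd) vec"
    and L :: real
  assumes n_pos: "n \<ge> 1"
    and blocks: "block_partition m S"
    and convex: "\<And>t. t \<in> {1..n} \<Longrightarrow> convex_on UNIV (ft t)"
    and grad_t: "\<And>t x. t \<in> {1..n} \<Longrightarrow> GDERIV (ft t) x :> gt t x"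
    and cont_t: "\<And>t. t \<in> {1..n} \<Longrightarrow> continuous_on UNIV (gt t)"
    and f_def: "\<And>x. f x = (1 / real n) * (\<Sum>t\<in>{1..n}. ft t x)"
    and grad_f: "\<And>x. GDERIV f x :> g x"
    and Q_psd: "\<And>j. j \<in> {1..m} \<Longrightarrow> psd (Q j)"
    and Q_bound: "\<And>t j x y. t \<in> {1..n} \<Longrightarrow> j \<in> {1..m} \<Longrightarrow>
        (norm (block_part S j (gt t x - gt t y)))\<^sup>2 \<le> qnorm_sq (Q j) (x - y)"
    and L_def: "L \<ge> 0" "L\<^sup>2 = 2 * mat_opnorm (Q_tilde m S Q)"
  shows "(\<forall>j\<in>{1..m}. \<forall>x y. (norm (block_part S j (g x - g y)))\<^sup>2 \<le> qnorm_sq (Q j) (x - y))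
    \<and> (\<forall>x y. f y - f x \<le> g x \<bullet> (y - x) + L / 2 * (norm (y - x))\<^sup>2)
    \<and> (\<forall>x y. (norm (g y - g x))\<^sup>2 \<le> 2 * L * (f y - f x - g x \<bullet> (y - x)))"
proof -
  have f_avg: "f = (\<lambda>x. (1 / real n) * (\<Sum>t\<in>{1..n}. ft t x))"
    using f_def by (rule ext)
  have g_avg: "g x = (1 / real n) *\<^sub>R (\<Sum>t\<in>{1..n}. gt t x)" for x
    using grad_f[of x] gderiv_scaled_sum[OF grad_t] unfolding f_avg by (rule gderiv_unique)
  have lipschitz: "(norm (vec_restrict (S j) (g x - g y)))\<^sup>2 \<le> qnorm_sq (Q j) (x - y)"
    if "j \<in> {1..m}" for j x y
  proof (rule vec_restrict_lipschitz_average[where g = g and gt = gt and I = "{1..n}"])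
    show "g x = (1 / real (card {1..n})) *\<^sub>R (\<Sum>t\<in>{1..n}. gt t x)" for x
      using g_avg by simp
  qed (use n_pos Q_bound[OF _ that] in \<open>simp_all add: block_part_eq_vec_restrict\<close>)
  have descent: "f y - f x \<le> g x \<bullet> (y - x) + L / 2 * (norm (y - x))\<^sup>2" for x y
    by (rule descent_inequality[OF blocks grad_f Q_psd lipschitz L_def])
  have "convex_on UNIV f"
    unfolding f_avg using convex by (intro convex_on_scaled_sum) simp_all
  then have tangent: "g x \<bullet> (y - x) \<le> f y - f x" for x y
    using grad_f by (rule gradient_inequality)
  show ?thesis
    using lipschitz descent cocoercive_of_descent[OF descent tangent \<open>0 \<le> L\<close>]
    by (simp add: block_part_eq_vec_restrict)
qed

end
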